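(* Let $G=(V,E)$ be a $d$-regular hypergraph and $k$ an integer. Then $\mathrm{DkSH}_d(G,k)\le\mathrm{MCDSH}_d(G,k)/p$, where $p=d!/d^d$.
   Context: A $d$-regular hypergraph has all hyperedges of size exactly $d$. For $S\subseteq V$, $E(S)=\{e\in E:e\subseteq S\}$; for $\phi:S\to[d]$, $E_\phi(S)=\{e\in E:e=\{v_1,\dots,v_d\}\subseteq S,\ \phi(v_i)\ne\phi(v_j)\ \forall i\ne j\}$. $\mathrm{DkSH}_d(G,k)$ is the maximum of $|E(S)|$ over $S\subseteq V$ with $|S|\le k$ (optimal value of Densest-$k$-Subhypergraph), and $\mathrm{MCDSH}_d(G,k)$ is the maximum of $|E_\phi(S)|$ over $S\subseteq V$ with $|S|\le k$ and $\phi:S\to[d]$. *)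

theory Defs
  imports Complex_Main
begin

definition regular_hypergraph :: "nat \<Rightarrow> 'a set \<Rightarrow> 'a set set \<Rightarrow> bool" where
  "regular_hypergraph d V E \<longleftrightarrow> finite V \<and> (\<forall>e\<in>E. e \<subseteq> V \<and> card e = d)"

definition induced_edges :: "'a set set \<Rightarrow> 'a set \<Rightarrow> 'a set set" where
  "induced_edges E S = {e\<in>E. e \<subseteq> S}"

definition colorful_edges :: "'a set set \<Rightarrow> 'a set \<Rightarrow> ('a \<Rightarrow> nat) \<Rightarrow> 'a set set" where
  "colorful_edges E S \<phi> = {e\<in>E. e \<subseteq> S \<and> (\<forall>u\<in>e. \<forall>v\<in>e. u \<noteq> v \<longrightarrow> \<phi> u \<noteq> \<phi> v)}"

definition DkSH :: "nat \<Rightarrow> 'a set \<Rightarrow> 'a set set \<Rightarrow> nat \<Rightarrow> nat" where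
  "DkSH d V E k = Max {card (induced_edges E S) | S. S \<subseteq> V \<and> card S \<le> k}"

definition MCDSH :: "nat \<Rightarrow> 'a set \<Rightarrow> 'a set set \<Rightarrow> nat \<Rightarrow> nat" where
  "MCDSH d V E k = Max {card (colorful_edges E S \<phi>) | S \<phi>.
      S \<subseteq> V \<and> card S \<le> k \<and> \<phi> ` S \<subseteq> {1..d}}"

end

theory Submission
  imports Defs "HOL-Library.FuncSet"
begin

text \<open>
  Fix S attaining DkSH and colour the vertices covered by E(S) uniformly at random with d colours.
  A given d-edge is rainbow for a d!/d^d fraction of the colourings, so on average, and hence for
  some colouring, at least a d!/d^d fraction of the edges of E(S) are rainbow.
\<close>

lemma sum_card_filter_swap:
  assumes "finite A" "finite B"
  shows "(\<Sum>a\<in>A. card {b \<in> B. P a b}) = (\<Sum>b\<in>B. card {a \<in> A. P a b})"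
proof -
  have "(\<Sum>a\<in>A. card {b \<in> B. P a b}) = (\<Sum>a\<in>A. \<Sum>b\<in>B. if P a b then 1 else 0)"
    using assms by (simp flip: sum.inter_filter)
  also have "\<dots> = (\<Sum>b\<in>B. \<Sum>a\<in>A. if P a b then 1 else 0)"
    by (rule sum.swap)
  also have "\<dots> = (\<Sum>b\<in>B. card {a \<in> A. P a b})"
    using assms by (simp flip: sum.inter_filter)
  finally show ?thesis .
qed

lemma card_funcset_inj_on_equicard:
  assumes "finite S" "finite C" "e \<subseteq> S" "card e = card C"
  shows "card {\<phi> \<in> S \<rightarrow>\<^sub>E C. inj_on \<phi> e} = fact (card C) * card C ^ (card S - card C)"
  using card_inj_on_subset_funcset[OF assms(1,2,3)] assms(4)
  by (simp add: fact_prod_rev[where 'a = nat] mult.commute)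

lemma sum_card_inj_on_members:
  assumes "finite S" "finite C" and A: "\<And>e. e \<in> A \<Longrightarrow> e \<subseteq> S \<and> card e = card C"
  shows "(\<Sum>\<phi> \<in> S \<rightarrow>\<^sub>E C. card {e \<in> A. inj_on \<phi> e})
           = card A * (fact (card C) * card C ^ (card S - card C))"
proof -
  have "finite A"
    using A assms(1) by (meson Pow_iff finite_Pow_iff finite_subset subsetI)
  then have "(\<Sum>\<phi> \<in> S \<rightarrow>\<^sub>E C. card {e \<in> A. inj_on \<phi> e})
             = (\<Sum>e\<in>A. card {\<phi> \<in> S \<rightarrow>\<^sub>E C. inj_on \<phi> e})"
    using assms by (intro sum_card_filter_swap) (auto simp: finite_PiE)
  also have "\<dots> = (\<Sum>e\<in>A. fact (card C) * card C ^ (card S - card C))"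
    using assms by (intro sum.cong refl card_funcset_inj_on_equicard) auto
  finally show ?thesis by simp
qed

text \<open>Colourings are taken on the covered vertices \<open>\<Union>A\<close> only: for \<open>d = 0\<close> a nonempty
  vertex set has no colouring with the empty palette, while \<open>\<Union>A\<close> is then empty.\<close>

lemma card_mult_fact_le_rainbow_bound:
  assumes fin: "finite (\<Union>A)" "finite C" and "card C = d"
    and card_members: "\<And>e. e \<in> A \<Longrightarrow> card e = d"
    and bound: "\<And>\<phi>. \<phi> \<in> \<Union>A \<rightarrow>\<^sub>E C \<Longrightarrow> card {e \<in> A. inj_on \<phi> e} \<le> m"
  shows "card A * fact d \<le> d ^ d * m"
proof (cases "A = {}")
  case False
  let ?S = "\<Union>A"
  obtain e where e: "e \<in> A" using False by blast
  have "d \<le> card ?S"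
    using card_mono[OF fin(1) Union_upper[OF e]] card_members[OF e] by simp
  then have split_power: "d ^ card ?S = d ^ (card ?S - d) * d ^ d"
    by (simp flip: power_add)
  have "d ^ (card ?S - d) > 0"
  proof (cases "d = 0")
    case True
    have "e = {}" if "e \<in> A" for e
      using card_members[OF that] True finite_subset[OF Union_upper[OF that] fin(1)] by simp
    then have "?S = {}" by blast
    then have "card ?S = 0" by (simp only: card.empty)
    with True show ?thesis by simp
  qed simp
  moreover have "d ^ (card ?S - d) * (card A * fact d) \<le> d ^ (card ?S - d) * (d ^ d * m)"
  proof -
    have "d ^ (card ?S - d) * (card A * fact d) = (\<Sum>\<phi> \<in> ?S \<rightarrow>\<^sub>E C. card {e \<in> A. inj_on \<phi> e})"
      using fin card_members \<open>card C = d\<close> by (subst sum_card_inj_on_members) auto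
    also have "\<dots> \<le> card (?S \<rightarrow>\<^sub>E C) * m"
      using sum_bounded_above[OF bound] by simp
    also have "\<dots> = d ^ (card ?S - d) * (d ^ d * m)"
      using fin \<open>card C = d\<close> by (simp add: card_funcsetE split_power)
    finally show ?thesis .
  qed
  ultimately show ?thesis by simp
qed simp

lemma regular_hypergraph_finite_edges:
  assumes "regular_hypergraph d V E"
  shows "finite E"
  using assms unfolding regular_hypergraph_def by (meson Pow_iff finite_Pow_iff finite_subset subsetI)

lemma DkSH_attained:
  assumes "regular_hypergraph d V E"
  obtains S where "S \<subseteq> V" "card S \<le> k" "DkSH d V E k = card (induced_edges E S)"
proof -
  let ?D = "{card (induced_edges E S) | S. S \<subseteq> V \<and> card S \<le> k}"
  have "?D \<subseteq> {..card E}"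
    using regular_hypergraph_finite_edges[OF assms]
    by (auto simp: induced_edges_def intro!: card_mono)
  moreover have "card (induced_edges E {}) \<in> ?D" by auto
  ultimately have "Max ?D \<in> ?D"
    by (intro Max_in) (auto dest: finite_subset)
  then show ?thesis
    using that unfolding DkSH_def by auto
qed

lemma card_colorful_edges_le_MCDSH:
  assumes "regular_hypergraph d V E" "S \<subseteq> V" "card S \<le> k" "\<phi> ` S \<subseteq> {1..d}"
  shows "card (colorful_edges E S \<phi>) \<le> MCDSH d V E k"
proof -
  let ?M = "{card (colorful_edges E S \<phi>) | S \<phi>. S \<subseteq> V \<and> card S \<le> k \<and> \<phi> ` S \<subseteq> {1..d}}"
  have "?M \<subseteq> {..card E}"
    using regular_hypergraph_finite_edges[OF assms(1)]
    by (auto simp: colorful_edges_def intro!: card_mono)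
  then show ?thesis
    unfolding MCDSH_def using assms(2-4) by (intro Max_ge) (auto dest: finite_subset)
qed

lemma colorful_edges_Union_induced_edges:
  "colorful_edges E (\<Union>(induced_edges E S)) \<phi> = {e \<in> induced_edges E S. inj_on \<phi> e}"
  unfolding colorful_edges_def induced_edges_def inj_on_def by blast

theorem mainTheorem17:
  fixes d k :: nat and V :: "'a set" and E :: "'a set set"
  assumes "regular_hypergraph d V E"
  shows "real (DkSH d V E k) \<le> real (MCDSH d V E k) / (fact d / real d ^ d)"
proof -
  obtain S where S: "S \<subseteq> V" "card S \<le> k" "DkSH d V E k = card (induced_edges E S)"
    using DkSH_attained[OF assms] .
  let ?A = "induced_edges E S"
  have "finite S" using S(1) assms by (auto simp: regular_hypergraph_def dest: finite_subset)
  then have fin: "finite (\<Union>?A)" by (auto simp: induced_edges_def dest: finite_subset)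
  have "card ?A * fact d \<le> d ^ d * MCDSH d V E k"
  proof (rule card_mult_fact_le_rainbow_bound[where C = "{1..d}"])
    show "card e = d" if "e \<in> ?A" for e
      using that assms by (auto simp: induced_edges_def regular_hypergraph_def)
    fix \<phi> assume "\<phi> \<in> \<Union>?A \<rightarrow>\<^sub>E {1..d}"
    moreover have "\<Union>?A \<subseteq> S" by (auto simp: induced_edges_def)
    ultimately show "card {e \<in> ?A. inj_on \<phi> e} \<le> MCDSH d V E k"
      using assms S \<open>finite S\<close> card_mono[of S "\<Union>?A"]
      by (subst colorful_edges_Union_induced_edges[symmetric], intro card_colorful_edges_le_MCDSH)
         (auto simp: PiE_iff)
  qed (use fin in simp_all)
  then have "real (DkSH d V E k) * fact d \<le> real d ^ d * real (MCDSH d V E k)"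
    unfolding S(3) by (metis of_nat_fact of_nat_le_iff of_nat_mult of_nat_power)
  moreover have "real d ^ d > 0"
    by (cases "d = 0") auto
  ultimately show ?thesis
    by (simp add: field_simps)
qed

end
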